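(* Let $Q$ be a groupoid quantale with base locale $A$ and let $X$ be a $Q$-locale. Then for all $q\in Q$ and $z\in X$, $$\varsigma_Q(q)\triangleright z=q\cdot1_X\wedge z.$$
   Context: Let $A$ be a locale. A groupoid quantale $Q$ (base locale $A$) is an involutive quantale which is an $A$-$A$-bimodule (actions $a\triangleright q$, $q\triangleleft a$) with $(a\triangleright x)y=a\triangleright(xy)$, $(x\triangleleft a)y=x(a\triangleright y)$, $(xy)\triangleleft a=x(y\triangleleft a)$, $(a\triangleright x\triangleleft b)^*=b\triangleright x^*\triangleleft a$; a frame with $(a\triangleright q)\wedge m=a\triangleright(q\wedge m)$, $m\wedge(q\triangleleft a)=(q\wedge m)\triangleleft a$; equipped with a sup-lattice homomorphism $\varsigma_Q:Q\to A$ with $\varsigma_Q(1_Q)=1_A$, $\varsigma_Q(x)\triangleright y\le xx^*y$, $\varsigma_Q(x)\triangleright x=x$, $\varsigma_Q(a\triangleright x)=a\wedge\varsigma_Q(x)$, and a frame homomorphism $\upsilon:Q\to A$ with $\upsilon(a\triangleright1_Q)=a=\upsilon(1_Q\triangleleft a)$; the right adjoint of $Q\otimes_AQ\to Q$ preserves joins; and $\bigvee_{xy\le a}\upsilon(x)\triangleright y=a$, $\upsilon(a)\triangleright1_Q=\bigvee_{xx^*\le a}x$. A $Q$-module is a locale $X$ with a left $Q$-action $q\cdot x$ and unital left $A$-module structure $a\triangleright x$ with $(a\triangleright q)\cdot x=a\triangleright(q\cdot x)$, $(q\triangleleft a)\cdot x=q\cdot(a\triangleright x)$, $a\triangleright(x\wedge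 y)=(a\triangleright x)\wedge y$. A pre-Hilbert $Q$-module has $\langle-,-\rangle:X\times X\to Q$ with $\langle q\cdot x,y\rangle=q\langle x,y\rangle$, $a\triangleright\langle x,1_X\rangle=\langle a\triangleright x,1_X\rangle$, $\langle\bigvee x_\alpha,y\rangle=\bigvee\langle x_\alpha,y\rangle$, $\langle x,y\rangle=\langle y,x\rangle^*$. A stably supported $Q$-module has in addition a monotone $\varsigma_X:X\to A$ with $\varsigma_X(1_X)=1_A$, $\varsigma_X(x)\triangleright1_X\le\langle x,x\rangle\cdot1_X$, $\varsigma_X(x)\triangleright x=x$, $\varsigma_X(q\cdot x)\le\varsigma_Q(q)$. With $Q\otimes_AX$ the quotient of $Q\otimes X$ by $(q\triangleleft a)\otimes x=q\otimes(a\triangleright x)$, a $Q$-locale is a stably supported $Q$-module such that the map $\alpha_*:X\to Q\otimes_AX$, $\alpha_*(x)=\bigvee_{q\cdot y\le x}q\otimes y$, preserves arbitrary joins, and $\bigvee_{q\cdot y\le x}\upsilon(q)\triangleright y=x$ for all $x\in X$. *)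

theory Defs
  imports Main
begin

unbundle lattice_syntax

text \<open>Frames (= locales, as complete lattices): binary meets distribute over arbitrary joins.
  (The library class complete_distrib_lattice is complete distributivity, which is stronger.)\<close>
class frame = complete_lattice +
  assumes inf_Sup_frame: "x \<sqinter> Sup S = Sup ((\<lambda>y. x \<sqinter> y) ` S)"

definition sup_hom :: "('p::complete_lattice \<Rightarrow> 'r::complete_lattice) \<Rightarrow> bool" where
  "sup_hom f \<longleftrightarrow> (\<forall>S. f (Sup S) = Sup (f ` S))"

definition frame_hom :: "('p::complete_lattice \<Rightarrow> 'r::complete_lattice) \<Rightarrow> bool" where
  "frame_hom f \<longleftrightarrow> sup_hom f \<and> f top = top \<and> (\<forall>x y. f (x \<sqinter> y) = f x \<sqinter> f y)"

definition involutive_quantale :: "('q::complete_lattice \<Rightarrow> 'q \<Rightarrow> 'q) \<Rightarrow> ('q \<Rightarrow> 'q) \<Rightarrow> bool" where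
  "involutive_quantale mult invo \<longleftrightarrow>
     (\<forall>x y z. mult (mult x y) z = mult x (mult y z)) \<and>
     (\<forall>x S. mult x (Sup S) = Sup (mult x ` S)) \<and>
     (\<forall>S y. mult (Sup S) y = Sup ((\<lambda>x. mult x y) ` S)) \<and>
     sup_hom invo \<and> (\<forall>x. invo (invo x) = x) \<and>
     (\<forall>x y. invo (mult x y) = mult (invo y) (invo x))"

definition left_module :: "('a::complete_lattice \<Rightarrow> 'a \<Rightarrow> 'a) \<Rightarrow> ('a \<Rightarrow> 'm::complete_lattice \<Rightarrow> 'm) \<Rightarrow> bool" where
  "left_module mult act \<longleftrightarrow>
     (\<forall>a S. act a (Sup S) = Sup (act a ` S)) \<and>
     (\<forall>S m. act (Sup S) m = Sup ((\<lambda>a. act a m) ` S)) \<and>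
     (\<forall>a b m. act (mult a b) m = act a (act b m))"

definition unital_left_locale_module :: "('a::frame \<Rightarrow> 'm::complete_lattice \<Rightarrow> 'm) \<Rightarrow> bool" where
  "unital_left_locale_module act \<longleftrightarrow> left_module (\<sqinter>) act \<and> (\<forall>m. act top m = m)"

text \<open>Unital right module over a locale A; the action is written  ract q a  for  q \<triangleleft> a.\<close>
definition unital_right_locale_module :: "('m::complete_lattice \<Rightarrow> 'a::frame \<Rightarrow> 'm) \<Rightarrow> bool" where
  "unital_right_locale_module ract \<longleftrightarrow>
     (\<forall>a S. ract (Sup S) a = Sup ((\<lambda>m. ract m a) ` S)) \<and>
     (\<forall>S m. ract m (Sup S) = Sup (ract m ` S)) \<and>
     (\<forall>a b m. ract m (a \<sqinter> b) = ract (ract m a) b) \<and>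
     (\<forall>m. ract m top = m)"

text \<open>Elements of Q \<otimes>_A X are represented (standard construction) as the subsets
  S of Q \<times> X that are down-closed, closed under joins in each variable separately,
  and saturated for the relations (q \<triangleleft> a) \<otimes> x = q \<otimes> (a \<triangleright> x).
  The pure tensor q \<otimes> x lies below S iff (q,x) \<in> S; the order is inclusion.\<close>
definition tens_ideal :: "('q::complete_lattice \<Rightarrow> 'a \<Rightarrow> 'q) \<Rightarrow> ('a \<Rightarrow> 'x::complete_lattice \<Rightarrow> 'x) \<Rightarrow> ('q \<times> 'x) set \<Rightarrow> bool" where
  "tens_ideal ract lact S \<longleftrightarrow>
     (\<forall>q x q' x'. (q, x) \<in> S \<and> q' \<le> q \<and> x' \<le> x \<longrightarrow> (q', x') \<in> S) \<and>
     (\<forall>Qs x. (\<forall>q\<in>Qs. (q, x) \<in> S) \<longrightarrow> (Sup Qs, x) \<in> S) \<and>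
     (\<forall>q Xs. (\<forall>x\<in>Xs. (q, x) \<in> S) \<longrightarrow> (q, Sup Xs) \<in> S) \<and>
     (\<forall>q a x. (ract q a, x) \<in> S \<longleftrightarrow> (q, lact a x) \<in> S)"

text \<open>Join in Q \<otimes>_A X of the pure tensors q \<otimes> x with (q,x) \<in> B.\<close>
definition tens_join :: "('q::complete_lattice \<Rightarrow> 'a \<Rightarrow> 'q) \<Rightarrow> ('a \<Rightarrow> 'x::complete_lattice \<Rightarrow> 'x) \<Rightarrow> ('q \<times> 'x) set \<Rightarrow> ('q \<times> 'x) set" where
  "tens_join ract lact B = \<Inter> {S. tens_ideal ract lact S \<and> B \<subseteq> S}"

text \<open>The map  x \<mapsto> \<Squnion>{q \<otimes> y | q \<cdot> y \<le> x} : X \<rightarrow> Q \<otimes>_A X  (right adjoint of the action).\<close>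
definition alpha_star :: "('q::complete_lattice \<Rightarrow> 'a \<Rightarrow> 'q) \<Rightarrow> ('a \<Rightarrow> 'x::complete_lattice \<Rightarrow> 'x) \<Rightarrow> ('q \<Rightarrow> 'x \<Rightarrow> 'x) \<Rightarrow> 'x \<Rightarrow> ('q \<times> 'x) set" where
  "alpha_star ract lact act x = tens_join ract lact {(q, y). act q y \<le> x}"

definition alpha_star_preserves_joins :: "('q::complete_lattice \<Rightarrow> 'a \<Rightarrow> 'q) \<Rightarrow> ('a \<Rightarrow> 'x::complete_lattice \<Rightarrow> 'x) \<Rightarrow> ('q \<Rightarrow> 'x \<Rightarrow> 'x) \<Rightarrow> bool" where
  "alpha_star_preserves_joins ract lact act \<longleftrightarrow>
     (\<forall>Xs. alpha_star ract lact act (Sup Xs) = tens_join ract lact (\<Union> (alpha_star ract lact act ` Xs)))"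

text \<open>Parameters: mult (multiplication of Q), invo (involution x*), lA (a \<triangleright> q),
  rA (q \<triangleleft> a, written rA q a), sQ (\<varsigma>_Q), ups (\<upsilon>).\<close>
definition groupoid_quantale ::
  "('q::frame \<Rightarrow> 'q \<Rightarrow> 'q) \<Rightarrow> ('q \<Rightarrow> 'q) \<Rightarrow> ('a::frame \<Rightarrow> 'q \<Rightarrow> 'q) \<Rightarrow> ('q \<Rightarrow> 'a \<Rightarrow> 'q)
    \<Rightarrow> ('q \<Rightarrow> 'a) \<Rightarrow> ('q \<Rightarrow> 'a) \<Rightarrow> bool" where
  "groupoid_quantale mult invo lA rA sQ ups \<longleftrightarrow>
     involutive_quantale mult invo \<and>
     unital_left_locale_module lA \<and> unital_right_locale_module rA \<and>
     (\<forall>a b q. rA (lA a q) b = lA a (rA q b)) \<and>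
     (\<forall>a x y. mult (lA a x) y = lA a (mult x y)) \<and>
     (\<forall>a x y. mult (rA x a) y = mult x (lA a y)) \<and>
     (\<forall>a x y. rA (mult x y) a = mult x (rA y a)) \<and>
     (\<forall>a b x. invo (rA (lA a x) b) = rA (lA b (invo x)) a) \<and>
     (\<forall>a q m. lA a q \<sqinter> m = lA a (q \<sqinter> m)) \<and>
     (\<forall>a q m. m \<sqinter> rA q a = rA (q \<sqinter> m) a) \<and>
     sup_hom sQ \<and> sQ top = top \<and>
     (\<forall>x y. lA (sQ x) y \<le> mult (mult x (invo x)) y) \<and>
     (\<forall>x. lA (sQ x) x = x) \<and>
     (\<forall>a x. sQ (lA a x) = a \<sqinter> sQ x) \<and>
     frame_hom ups \<and>
     (\<forall>a. ups (lA a top) = a \<and> ups (rA top a) = a) \<and>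
     alpha_star_preserves_joins rA lA mult \<and>
     (\<forall>a. Sup {lA (ups x) y | x y. mult x y \<le> a} = a) \<and>
     (\<forall>a. lA (ups a) top = Sup {x. mult x (invo x) \<le> a})"

text \<open>act: q \<cdot> x;  lX: a \<triangleright> x on X.\<close>
definition Q_module ::
  "('q::frame \<Rightarrow> 'q \<Rightarrow> 'q) \<Rightarrow> ('a::frame \<Rightarrow> 'q \<Rightarrow> 'q) \<Rightarrow> ('q \<Rightarrow> 'a \<Rightarrow> 'q)
    \<Rightarrow> ('q \<Rightarrow> 'x::frame \<Rightarrow> 'x) \<Rightarrow> ('a \<Rightarrow> 'x \<Rightarrow> 'x) \<Rightarrow> bool" where
  "Q_module mult lA rA act lX \<longleftrightarrow>
     left_module mult act \<and> unital_left_locale_module lX \<and>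
     (\<forall>a q x. act (lA a q) x = lX a (act q x)) \<and>
     (\<forall>a q x. act (rA q a) x = act q (lX a x)) \<and>
     (\<forall>a x y. lX a (x \<sqinter> y) = lX a x \<sqinter> y)"

definition pre_Hilbert_Q_module ::
  "('q::frame \<Rightarrow> 'q \<Rightarrow> 'q) \<Rightarrow> ('q \<Rightarrow> 'q) \<Rightarrow> ('a::frame \<Rightarrow> 'q \<Rightarrow> 'q) \<Rightarrow> ('q \<Rightarrow> 'a \<Rightarrow> 'q)
    \<Rightarrow> ('q \<Rightarrow> 'x::frame \<Rightarrow> 'x) \<Rightarrow> ('a \<Rightarrow> 'x \<Rightarrow> 'x) \<Rightarrow> ('x \<Rightarrow> 'x \<Rightarrow> 'q) \<Rightarrow> bool" where
  "pre_Hilbert_Q_module mult invo lA rA act lX inner \<longleftrightarrow>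
     Q_module mult lA rA act lX \<and>
     (\<forall>q x y. inner (act q x) y = mult q (inner x y)) \<and>
     (\<forall>a x. lA a (inner x top) = inner (lX a x) top) \<and>
     (\<forall>S y. inner (Sup S) y = Sup ((\<lambda>x. inner x y) ` S)) \<and>
     (\<forall>x y. inner x y = invo (inner y x))"

definition stably_supported_Q_module ::
  "('q::frame \<Rightarrow> 'q \<Rightarrow> 'q) \<Rightarrow> ('q \<Rightarrow> 'q) \<Rightarrow> ('a::frame \<Rightarrow> 'q \<Rightarrow> 'q) \<Rightarrow> ('q \<Rightarrow> 'a \<Rightarrow> 'q) \<Rightarrow> ('q \<Rightarrow> 'a)
    \<Rightarrow> ('q \<Rightarrow> 'x::frame \<Rightarrow> 'x) \<Rightarrow> ('a \<Rightarrow> 'x \<Rightarrow> 'x) \<Rightarrow> ('x \<Rightarrow> 'x \<Rightarrow> 'q) \<Rightarrow> ('x \<Rightarrow> 'a) \<Rightarrow> bool" where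
  "stably_supported_Q_module mult invo lA rA sQ act lX inner sX \<longleftrightarrow>
     pre_Hilbert_Q_module mult invo lA rA act lX inner \<and>
     mono sX \<and> sX top = top \<and>
     (\<forall>x. lX (sX x) top \<le> act (inner x x) top) \<and>
     (\<forall>x. lX (sX x) x = x) \<and>
     (\<forall>q x. sX (act q x) \<le> sQ q)"

definition Q_locale ::
  "('q::frame \<Rightarrow> 'q \<Rightarrow> 'q) \<Rightarrow> ('q \<Rightarrow> 'q) \<Rightarrow> ('a::frame \<Rightarrow> 'q \<Rightarrow> 'q) \<Rightarrow> ('q \<Rightarrow> 'a \<Rightarrow> 'q) \<Rightarrow> ('q \<Rightarrow> 'a)
    \<Rightarrow> ('q \<Rightarrow> 'a) \<Rightarrow> ('q \<Rightarrow> 'x::frame \<Rightarrow> 'x) \<Rightarrow> ('a \<Rightarrow> 'x \<Rightarrow> 'x) \<Rightarrow> ('x \<Rightarrow> 'x \<Rightarrow> 'q) \<Rightarrow> ('x \<Rightarrow> 'a) \<Rightarrow> bool" where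
  "Q_locale mult invo lA rA sQ ups act lX inner sX \<longleftrightarrow>
     stably_supported_Q_module mult invo lA rA sQ act lX inner sX \<and>
     alpha_star_preserves_joins rA lX act \<and>
     (\<forall>x. Sup {lX (ups q) y | q y. act q y \<le> x} = x)"

end

theory Submission
  imports Defs
begin

text \<open>Since a \<triangleright> z = (a \<triangleright> 1) \<sqinter> z in any Q-module, it suffices to show
  \<open>\<varsigma>(q) \<triangleright> 1 = q \<cdot> 1\<close>. From \<open>\<varsigma>(q) \<triangleright> q = q\<close> we get \<open>q \<cdot> 1 = \<varsigma>(q) \<triangleright> (q \<cdot> 1) \<le> \<varsigma>(q) \<triangleright> 1\<close>.
  Conversely, stable support at the top element gives \<open>1 = \<langle>1,1\<rangle> \<cdot> 1\<close>, hence
  \<open>\<varsigma>(q) \<triangleright> 1 = (\<varsigma>(q) \<triangleright> \<langle>1,1\<rangle>) \<cdot> 1 \<le> q q* \<langle>1,1\<rangle> \<cdot> 1 \<le> q \<cdot> 1\<close>.\<close>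

lemma sup_hom_mono:
  assumes "sup_hom f"
  shows "mono f"
proof
  fix x y :: 'a
  assume "x \<le> y"
  then have "f y = f (Sup {x, y})"
    by (simp add: sup_absorb2)
  also have "\<dots> = Sup (f ` {x, y})"
    using assms unfolding sup_hom_def by blast
  finally show "f x \<le> f y"
    by (metis Sup_upper image_insert insertI1)
qed

lemma left_module_mono:
  assumes "left_module mult act"
  shows "mono (act a)" and "mono (\<lambda>a. act a m)"
  using assms unfolding left_module_def
  by (auto intro!: sup_hom_mono simp: sup_hom_def)

lemma Q_module_lX_eq_inf:
  assumes "Q_module mult lA rA act lX"
  shows "lX a x = lX a top \<sqinter> x"
  using assms unfolding Q_module_def by (metis inf_top_left)

lemma Q_module_act_le_support:
  assumes "Q_module mult lA rA act lX" and "lA (sQ q) q = q"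
  shows "act q x \<le> lX (sQ q) top"
proof -
  have "act q x = lX (sQ q) (act q x)"
    using assms unfolding Q_module_def by metis
  also have "\<dots> = lX (sQ q) top \<sqinter> act q x"
    using assms(1) by (rule Q_module_lX_eq_inf)
  finally show ?thesis
    by (metis inf.absorb_iff2 inf_commute)
qed

lemma stably_supported_act_inner_top:
  assumes "stably_supported_Q_module mult invo lA rA sQ act lX inner sX"
  shows "act (inner top top) top = top"
proof -
  have "lX (sX top) top = top" and "lX (sX top) top \<le> act (inner top top) top"
    using assms unfolding stably_supported_Q_module_def by blast+
  then show ?thesis
    by (simp add: top_le)
qed

lemma stably_supported_support_le_act:
  assumes ss: "stably_supported_Q_module mult invo lA rA sQ act lX inner sX"
    and support: "\<forall>y. lA (sQ q) y \<le> mult (mult q (invo q)) y"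
  shows "lX (sQ q) top \<le> act q top"
proof -
  have "Q_module mult lA rA act lX"
    using ss unfolding stably_supported_Q_module_def pre_Hilbert_Q_module_def by blast
  then have act: "left_module mult act"
    and act_lA: "\<And>a p x. act (lA a p) x = lX a (act p x)"
    unfolding Q_module_def by blast+
  let ?p = "inner top top"
  have "lX (sQ q) top = lX (sQ q) (act ?p top)"
    using stably_supported_act_inner_top[OF ss] by simp
  also have "\<dots> = act (lA (sQ q) ?p) top"
    by (simp add: act_lA)
  also have "\<dots> \<le> act (mult (mult q (invo q)) ?p) top"
    using support left_module_mono(2)[OF act] by (simp add: mono_def)
  also have "\<dots> = act q (act (mult (invo q) ?p) top)"
    using act unfolding left_module_def by simp
  also have "\<dots> \<le> act q top"
    using left_module_mono(1)[OF act] by (simp add: mono_def)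
  finally show ?thesis .
qed

theorem corollary5p2:
  fixes mult :: "'q::frame \<Rightarrow> 'q \<Rightarrow> 'q" and invo :: "'q \<Rightarrow> 'q"
    and lA :: "'a::frame \<Rightarrow> 'q \<Rightarrow> 'q" and rA :: "'q \<Rightarrow> 'a \<Rightarrow> 'q"
    and sQ :: "'q \<Rightarrow> 'a" and ups :: "'q \<Rightarrow> 'a"
    and act :: "'q \<Rightarrow> 'x::frame \<Rightarrow> 'x" and lX :: "'a \<Rightarrow> 'x \<Rightarrow> 'x"
    and inner :: "'x \<Rightarrow> 'x \<Rightarrow> 'q" and sX :: "'x \<Rightarrow> 'a"
  assumes "groupoid_quantale mult invo lA rA sQ ups"
    and "Q_locale mult invo lA rA sQ ups act lX inner sX"
  shows "\<forall>q z. lX (sQ q) z = inf (act q top) z"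
proof (intro allI)
  fix q z
  have support_le: "\<forall>y. lA (sQ q) y \<le> mult (mult q (invo q)) y"
    and support_fixes: "lA (sQ q) q = q"
    using assms(1) unfolding groupoid_quantale_def by blast+
  have ss: "stably_supported_Q_module mult invo lA rA sQ act lX inner sX"
    using assms(2) unfolding Q_locale_def by blast
  then have Q: "Q_module mult lA rA act lX"
    unfolding stably_supported_Q_module_def pre_Hilbert_Q_module_def by blast
  have "lX (sQ q) top = act q top"
    using stably_supported_support_le_act[OF ss support_le]
      Q_module_act_le_support[where sQ = sQ, OF Q support_fixes] by (rule order.antisym)
  then show "lX (sQ q) z = act q top \<sqinter> z"
    using Q_module_lX_eq_inf[OF Q] by metis
qed

end
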